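(* Let $q>3$ be odd and $u=\begin{pmatrix}1&1\\0&1\end{pmatrix}$. Then the conjugacy class of $u$ in $\mathbf{GL}_2(q)$ is of type D.
   Context: Conjugacy classes are racks with $x\triangleright y=xyx^{-1}$. A subrack $Y$ is decomposable if $Y=R\sqcup S$ with nonempty subracks $R,S$, $Y\triangleright R=R$, $Y\triangleright S=S$. Type D: a decomposable subrack $R\sqcup S$ with $r\in R,s\in S$ and $r\triangleright(s\triangleright(r\triangleright s))\neq s$. *)

theory Defs
  imports "HOL-Analysis.Analysis"
begin

text \<open>Abstract rack notions, relative to a binary operation op (x |> y = op x y)
  on an ambient set X.\<close>

definition subrack :: "('x \<Rightarrow> 'x \<Rightarrow> 'x) \<Rightarrow> 'x set \<Rightarrow> 'x set \<Rightarrow> bool" where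
  "subrack op X Y \<longleftrightarrow> Y \<subseteq> X \<and> (\<forall>a\<in>Y. \<forall>b\<in>Y. op a b \<in> Y)"

definition rack_act_set :: "('x \<Rightarrow> 'x \<Rightarrow> 'x) \<Rightarrow> 'x set \<Rightarrow> 'x set \<Rightarrow> 'x set" where
  "rack_act_set op Y R = {op y r | y r. y \<in> Y \<and> r \<in> R}"

definition decomposition :: "('x \<Rightarrow> 'x \<Rightarrow> 'x) \<Rightarrow> 'x set \<Rightarrow> 'x set \<Rightarrow> 'x set \<Rightarrow> 'x set \<Rightarrow> bool" where
  "decomposition op X Y R S \<longleftrightarrow>
     subrack op X Y \<and> subrack op X R \<and> subrack op X S \<and>
     R \<noteq> {} \<and> S \<noteq> {} \<and> Y = R \<union> S \<and> R \<inter> S = {} \<and>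
     rack_act_set op Y R = R \<and> rack_act_set op Y S = S"

definition type_D :: "('x \<Rightarrow> 'x \<Rightarrow> 'x) \<Rightarrow> 'x set \<Rightarrow> bool" where
  "type_D op X \<longleftrightarrow> (\<exists>Y R S. decomposition op X Y R S \<and>
     (\<exists>r\<in>R. \<exists>s\<in>S. op r (op s (op r s)) \<noteq> s))"

definition GL2 :: "('a::field ^2^2) set" where
  "GL2 = {g. invertible g}"

definition conj2 :: "'a::field ^2^2 \<Rightarrow> 'a^2^2 \<Rightarrow> 'a^2^2" where
  "conj2 x y = x ** y ** matrix_inv x"

definition conj_class2 :: "'a::field ^2^2 \<Rightarrow> ('a^2^2) set" where
  "conj_class2 h = {conj2 g h | g. g \<in> GL2}"

definition unip :: "'a::field ^2^2" where
  "unip = (\<chi> i j. if i = j \<or> (i = 1 \<and> j = 2) then 1 else 0)"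

end

theory Submission
  imports Defs "HOL-Number_Theory.Residues"
begin

text \<open>Conjugating u by diag(l, 1) gives the transvection with upper entry l. For a
  non-square l the SL(2)-orbits of these two transvections are disjoint: an
  SL(2)-conjugate of ((1, e), (0, 1)) has off-diagonal entries e p^2 and -e q^2 with
  (p, q) \<noteq> (0, 0). Both orbits consist of determinant-one matrices, so each is stable
  under conjugation by their union, which is therefore a decomposable subrack of the
  class. In it, the upper transvection r with entry t^2 and the lower transvection s
  with entry -l satisfy r \<triangleright> (s \<triangleright> (r \<triangleright> s)) = s only if t^2 l = 2, and some
  t \<noteq> 0 avoids this as soon as the field has more than three elements.\<close>

definition mat2 :: "'a::field \<Rightarrow> 'a \<Rightarrow> 'a \<Rightarrow> 'a \<Rightarrow> 'a^2^2" where
  "mat2 a b c d = (\<chi> i j. if i = 1 then (if j = 1 then a else b) else (if j = 1 then c else d))"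

lemma mat2_nth [simp]:
  "mat2 a b c d $ 1 $ 1 = a" "mat2 a b c d $ 1 $ 2 = b"
  "mat2 a b c d $ 2 $ 1 = c" "mat2 a b c d $ 2 $ 2 = d"
  by (simp_all add: mat2_def)

lemma mat2_eq_iff: "mat2 a b c d = mat2 a' b' c' d' \<longleftrightarrow> a = a' \<and> b = b' \<and> c = c' \<and> d = d'"
  by (metis mat2_nth)

lemma mat2_entries: "(A::'a::field^2^2) = mat2 (A$1$1) (A$1$2) (A$2$1) (A$2$2)"
  by (simp add: vec_eq_iff forall_2)

lemma mat2_mult:
  "mat2 a b c d ** mat2 a' b' c' d' = mat2 (a*a' + b*c') (a*b' + b*d') (c*a' + d*c') (c*b' + d*d')"
  by (simp add: vec_eq_iff forall_2 matrix_matrix_mult_def sum_2)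

lemma det_mat2: "det (mat2 a b c d) = a*d - b*c"
  by (simp add: det_2)

lemma mat_1_eq_mat2: "(mat 1 :: 'a::field^2^2) = mat2 1 0 0 1"
  by (simp add: vec_eq_iff forall_2 mat_def)

lemma unip_eq_mat2: "(unip :: 'a::field^2^2) = mat2 1 1 0 1"
  by (simp add: vec_eq_iff forall_2 unip_def)

lemma matrix_inv_inverse:
  fixes A :: "'a::semiring_1^'n^'m"
  assumes "invertible A"
  shows "A ** matrix_inv A = mat 1" and "matrix_inv A ** A = mat 1"
  using someI_ex[of "\<lambda>B. A ** B = mat 1 \<and> B ** A = mat 1"] assms
  unfolding invertible_def matrix_inv_def by blast+

lemma matrix_inv_eqI:
  fixes A :: "'a::semiring_1^'n^'m" and B :: "'a^'m^'n"
  assumes AB: "A ** B = mat 1" and BA: "B ** A = mat 1"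
  shows "matrix_inv A = B"
proof -
  have inv: "matrix_inv A ** A = mat 1"
    using matrix_inv_inverse AB BA invertible_def by blast
  have "matrix_inv A = matrix_inv A ** (A ** B)" by (simp add: AB matrix_mul_rid)
  also have "\<dots> = B" by (simp add: inv matrix_mul_assoc)
  finally show ?thesis .
qed

lemma matrix_inv_mat2:
  fixes a b c d :: "'a::field"
  assumes "a*d - b*c \<noteq> 0"
  shows "matrix_inv (mat2 a b c d) = mat2 (d / (a*d - b*c)) (- b / (a*d - b*c)) (- c / (a*d - b*c)) (a / (a*d - b*c))"
proof -
  define \<delta> where "\<delta> = a*d - b*c"
  have "a*d - b*c = \<delta>" "d*a - c*b = \<delta>" "\<delta> \<noteq> 0" using assms by (simp_all add: \<delta>_def algebra_simps)
  then show ?thesis unfolding \<delta>_def[symmetric]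
    by (intro matrix_inv_eqI)
      (simp_all add: mat2_mult mat_1_eq_mat2 mat2_eq_iff add_divide_distrib[symmetric]
        diff_divide_distrib[symmetric] algebra_simps)
qed

lemma conj2_transvection:
  fixes a b c d e :: "'a::field"
  assumes "a*d - b*c = 1"
  shows "conj2 (mat2 a b c d) (mat2 1 e 0 1) = mat2 (1 - e*a*c) (e*a*a) (-e*c*c) (1 + e*a*c)"
proof -
  have "conj2 (mat2 a b c d) (mat2 1 e 0 1)
      = mat2 ((a*d - b*c) - e*a*c) (e*a*a) (-e*c*c) ((a*d - b*c) + e*a*c)"
    unfolding conj2_def using assms
    by (simp add: matrix_inv_mat2 mat2_mult mat2_eq_iff algebra_simps)
  with assms show ?thesis by simp
qed

lemma conj2_conj2:
  fixes g h x :: "'a::field^2^2"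
  assumes g: "invertible g" and h: "invertible h"
  shows "conj2 g (conj2 h x) = conj2 (g ** h) x"
proof -
  have "matrix_inv (g ** h) = matrix_inv h ** matrix_inv g"
    using matrix_inv_inverse[OF g] matrix_inv_inverse[OF h]
    by (intro matrix_inv_eqI) (metis matrix_mul_assoc matrix_mul_rid matrix_mul_lid)+
  then show ?thesis unfolding conj2_def by (simp add: matrix_mul_assoc)
qed

lemma det_conj2:
  fixes g x :: "'a::field^2^2"
  assumes "invertible g"
  shows "det (conj2 g x) = det x"
proof -
  have "det g * det (matrix_inv g) = 1"
    using matrix_inv_inverse[OF assms] det_mul[of g "matrix_inv g"] by simp
  then show ?thesis unfolding conj2_def det_mul by (simp add: algebra_simps)
qed

lemma conj2_self:
  fixes x :: "'a::field^2^2"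
  assumes "invertible x"
  shows "conj2 x x = x"
  using matrix_inv_inverse[OF assms] unfolding conj2_def by (metis matrix_mul_assoc matrix_mul_rid)

lemma conj2_mat_1: "conj2 (mat 1) x = (x :: 'a::field^2^2)"
  by (simp add: conj2_def matrix_inv_eqI)

lemma invertible_if_det_eq_1: "det (g :: 'a::field^2^2) = 1 \<Longrightarrow> invertible g"
  by (simp add: invertible_det_nz)

definition SL2_orbit :: "'a::field^2^2 \<Rightarrow> ('a^2^2) set" where
  "SL2_orbit x = {conj2 g x | g. det g = 1}"

lemma SL2_orbit_self: "x \<in> SL2_orbit x"
  unfolding SL2_orbit_def by (force intro: exI[of _ "mat 1"] simp: conj2_mat_1)

lemma conj2_in_SL2_orbit:
  assumes "det g = 1" and "y \<in> SL2_orbit x"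
  shows "conj2 g y \<in> SL2_orbit x"
proof -
  obtain h where h: "det h = 1" "y = conj2 h x" using assms(2) unfolding SL2_orbit_def by blast
  then have "conj2 g y = conj2 (g ** h) x" and "det (g ** h) = 1"
    using assms(1) by (simp_all add: conj2_conj2 invertible_if_det_eq_1 det_mul)
  then show ?thesis unfolding SL2_orbit_def by blast
qed

lemma det_SL2_orbit: "y \<in> SL2_orbit x \<Longrightarrow> det y = det x"
  unfolding SL2_orbit_def by (auto simp: det_conj2 invertible_if_det_eq_1)

lemma conj2_in_conj_class2: "invertible g \<Longrightarrow> conj2 g x \<in> conj_class2 x"
  by (auto simp: conj_class2_def GL2_def)

lemma conj_class2_self: "x \<in> conj_class2 (x :: 'a::field^2^2)"
  using conj2_in_conj_class2[of "mat 1" x] by (simp add: conj2_mat_1 invertible_det_nz)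

lemma SL2_orbit_subset_conj_class2:
  assumes "x \<in> conj_class2 u"
  shows "SL2_orbit x \<subseteq> conj_class2 u"
proof
  fix y assume "y \<in> SL2_orbit x"
  then obtain h where h: "det h = 1" "y = conj2 h x" unfolding SL2_orbit_def by blast
  obtain g where g: "invertible g" "x = conj2 g u"
    using assms unfolding conj_class2_def GL2_def by blast
  have "y = conj2 (h ** g) u" and "invertible (h ** g)"
    using h g by (simp_all add: conj2_conj2 invertible_if_det_eq_1 invertible_mult)
  then show "y \<in> conj_class2 u" unfolding conj_class2_def GL2_def by blast
qed

lemma decomposition_SL2_orbits:
  fixes x y :: "'a::field^2^2"
  assumes det: "det x = 1" "det y = 1"
    and disjoint: "SL2_orbit x \<inter> SL2_orbit y = {}"
    and subset: "SL2_orbit x \<subseteq> X" "SL2_orbit y \<subseteq> X"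
  shows "decomposition conj2 X (SL2_orbit x \<union> SL2_orbit y) (SL2_orbit x) (SL2_orbit y)"
proof -
  let ?Y = "SL2_orbit x \<union> SL2_orbit y"
  have det_Y: "det g = 1" if "g \<in> ?Y" for g
    using that det_SL2_orbit[of g x] det_SL2_orbit[of g y] unfolding det by blast
  have stable: "conj2 g z \<in> SL2_orbit w" if "g \<in> ?Y" "z \<in> SL2_orbit w" for g z w
    using conj2_in_SL2_orbit det_Y that by blast
  have invariant: "rack_act_set conj2 ?Y (SL2_orbit w) = SL2_orbit w" if "SL2_orbit w \<subseteq> ?Y" for w
  proof
    show "rack_act_set conj2 ?Y (SL2_orbit w) \<subseteq> SL2_orbit w"
      unfolding rack_act_set_def using stable by blast
    have "z = conj2 z z" if "z \<in> SL2_orbit w" for z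
      using that \<open>SL2_orbit w \<subseteq> ?Y\<close> det_Y by (auto simp: conj2_self invertible_if_det_eq_1)
    then show "SL2_orbit w \<subseteq> rack_act_set conj2 ?Y (SL2_orbit w)"
      unfolding rack_act_set_def using that by blast
  qed
  show ?thesis
    unfolding decomposition_def subrack_def
    using subset disjoint stable invariant[of x] invariant[of y] SL2_orbit_self[of x] SL2_orbit_self[of y]
    by auto
qed

lemma SL2_orbit_transvection_entries:
  fixes e :: "'a::field"
  assumes "z \<in> SL2_orbit (mat2 1 e 0 1)"
  obtains p q where "z $ 1 $ 2 = e * (p*p)" "z $ 2 $ 1 = - e * (q*q)" "p \<noteq> 0 \<or> q \<noteq> 0"
proof -
  obtain g where g: "det g = 1" "z = conj2 g (mat2 1 e 0 1)"
    using assms unfolding SL2_orbit_def by blast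
  have det_g: "g$1$1 * g$2$2 - g$1$2 * g$2$1 = 1"
    using g(1) mat2_entries[of g] det_mat2 by metis
  then have "z = mat2 (1 - e*g$1$1*g$2$1) (e*g$1$1*g$1$1) (-e*g$2$1*g$2$1) (1 + e*g$1$1*g$2$1)"
    using g(2) mat2_entries[of g] conj2_transvection by metis
  moreover have "g$1$1 \<noteq> 0 \<or> g$2$1 \<noteq> 0" using det_g by auto
  ultimately show ?thesis using that[of "g$1$1" "g$2$1"] by (simp add: mult.assoc)
qed

lemma SL2_orbits_transvections_disjoint:
  fixes l :: "'a::field"
  assumes nonsquare: "\<And>t. t*t \<noteq> l"
  shows "SL2_orbit (mat2 1 1 0 1) \<inter> SL2_orbit (mat2 1 l 0 1) = {}"
proof (rule ccontr)
  assume "SL2_orbit (mat2 1 1 0 1) \<inter> SL2_orbit (mat2 1 l 0 1) \<noteq> {}"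
  then obtain z where z1: "z \<in> SL2_orbit (mat2 1 1 0 1)" and zl: "z \<in> SL2_orbit (mat2 1 l 0 1)"
    by blast
  obtain p q where pq: "z $ 1 $ 2 = p*p" "z $ 2 $ 1 = - (q*q)"
    using SL2_orbit_transvection_entries[OF z1] by (metis mult_1_left mult_minus_left)
  obtain p' q' where pq': "z $ 1 $ 2 = l * (p'*p')" "z $ 2 $ 1 = - l * (q'*q')" "p' \<noteq> 0 \<or> q' \<noteq> 0"
    using SL2_orbit_transvection_entries[OF zl] by blast
  show False
  proof (cases "p' = 0")
    case False
    then have "(p/p') * (p/p') = l" using pq(1) pq'(1) by (simp add: field_simps)
    then show False using nonsquare by blast
  next
    case True
    then have "(q/q') * (q/q') = l" using pq(2) pq'(2,3) by (simp add: field_simps)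
    then show False using nonsquare by blast
  qed
qed

lemma transvection_square_multiple_in_SL2_orbit:
  fixes e t :: "'a::field"
  assumes "t \<noteq> 0"
  shows "mat2 1 (t*t*e) 0 1 \<in> SL2_orbit (mat2 1 e 0 1)"
proof -
  have "conj2 (mat2 t 0 0 (1/t)) (mat2 1 e 0 1) = mat2 1 (t*t*e) 0 1"
    using assms conj2_transvection[of t "1/t" 0 0 e] by (simp add: mult.commute mult.left_commute)
  moreover have "det (mat2 t 0 0 (1/t)) = 1" using assms by (simp add: det_mat2)
  ultimately show ?thesis unfolding SL2_orbit_def by force
qed

lemma lower_transvection_in_SL2_orbit:
  fixes e :: "'a::field"
  shows "mat2 1 0 (-e) 1 \<in> SL2_orbit (mat2 1 e 0 1)"
proof -
  have "conj2 (mat2 0 1 (-1) 0) (mat2 1 e 0 1) = mat2 1 0 (-e) 1"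
    using conj2_transvection[of 0 0 1 "-1" e] by simp
  moreover have "det (mat2 0 1 (-1) (0::'a)) = 1" by (simp add: det_mat2)
  ultimately show ?thesis unfolding SL2_orbit_def by force
qed

lemma transvection_in_conj_class2_unip:
  fixes l :: "'a::field"
  assumes "l \<noteq> 0"
  shows "mat2 1 l 0 1 \<in> conj_class2 unip"
proof -
  have "conj2 (mat2 l 0 0 1) unip = mat2 1 l 0 1" and "invertible (mat2 l 0 0 1)"
    using assms
    by (simp_all add: unip_eq_mat2 conj2_def matrix_inv_mat2 mat2_mult invertible_det_nz det_mat2)
  then show ?thesis by (metis conj2_in_conj_class2)
qed

lemma conj2_transvections_ne:
  fixes a m :: "'a::field"
  assumes "a \<noteq> 0" "m \<noteq> 0" "a*m + 2 \<noteq> 0"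
  defines "r \<equiv> mat2 1 a 0 1" and "s \<equiv> mat2 1 0 m 1"
  shows "conj2 r (conj2 s (conj2 r s)) \<noteq> s"
proof
  assume "conj2 r (conj2 s (conj2 r s)) = s"
  then have "(a*m*m) * (a*m + 2) = 0"
    unfolding r_def s_def conj2_def
    by (simp add: matrix_inv_mat2 det_mat2 mat2_mult mat2_eq_iff algebra_simps)
  with assms show False by simp
qed

lemma two_neq_zero_if_odd_card:
  assumes "odd CARD('a::{field,finite})"
  shows "(2::'a) \<noteq> 0"
proof
  assume "(2::'a) = 0"
  then have "CHAR('a) dvd 2" using of_nat_eq_0_iff_char_dvd[of 2, where 'a='a] by simp
  moreover have "CHAR('a) dvd CARD('a)" by (rule CHAR_dvd_CARD)
  then have "odd CHAR('a)" using assms dvd_trans by blast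
  moreover have "CHAR('a) = 1 \<or> CHAR('a) = 2"
    using \<open>CHAR('a) dvd 2\<close> two_is_prime_nat prime_nat_iff by blast
  ultimately show False by auto
qed

lemma exists_nonsquare:
  assumes "(2::'a::{field,finite}) \<noteq> 0"
  obtains l where "\<And>t::'a. t*t \<noteq> l"
proof -
  have "(1::'a) \<noteq> -1" using assms by (metis add.right_inverse one_add_one)
  then have "\<not> inj (\<lambda>t::'a. t*t)" by (metis injD minus_mult_minus mult_1)
  then have "\<not> surj (\<lambda>t::'a. t*t)" using finite_UNIV_surj_inj[OF finite_class.finite_UNIV] by blast
  then show ?thesis using that by (metis surjI)
qed

lemma exists_nonzero_square_mult_neq:
  fixes l c :: "'a::{field,finite}"
  assumes "l \<noteq> 0" and "CARD('a) > 3"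
  obtains t where "t \<noteq> 0" "t*t*l \<noteq> c"
proof (cases "l = c")
  case True
  have "card {0, 1, -1::'a} < CARD('a)"
    using card_length[of "[0, 1, -1::'a]"] assms(2) by simp
  then have "{0, 1, -1::'a} \<noteq> UNIV" by (metis less_irrefl)
  then obtain t :: 'a where t: "t \<noteq> 0" "t \<noteq> 1" "t \<noteq> -1" by blast
  then have "(t - 1) * (t + 1) \<noteq> 0" by (auto simp: add_eq_0_iff minus_equation_iff)
  then have "t*t \<noteq> 1" by (simp add: algebra_simps)
  then have "t*t*l \<noteq> c" using True assms(1) by simp
  with t that show ?thesis by blast
next
  case False
  then show ?thesis using that[of 1] by simp
qed

theorem mainTheorem11:
  assumes "odd CARD('a::{field,finite})" and "CARD('a) > 3"
  shows "type_D (conj2 :: 'a^2^2 \<Rightarrow> _) (conj_class2 (unip :: 'a^2^2))"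
proof -
  obtain l :: 'a where nonsquare: "\<And>t. t*t \<noteq> l"
    using exists_nonsquare two_neq_zero_if_odd_card[OF assms(1)] by blast
  then have "l \<noteq> 0" by (metis mult_zero_left)
  obtain t :: 'a where t: "t \<noteq> 0" "t*t*l \<noteq> 2"
    using exists_nonzero_square_mult_neq[OF \<open>l \<noteq> 0\<close> assms(2)] by blast
  define R where "R = SL2_orbit (unip :: 'a^2^2)"
  define S where "S = SL2_orbit (mat2 1 l 0 1)"
  have "R \<subseteq> conj_class2 unip" "S \<subseteq> conj_class2 unip"
    unfolding R_def S_def using \<open>l \<noteq> 0\<close>
    by (simp_all add: SL2_orbit_subset_conj_class2 conj_class2_self transvection_in_conj_class2_unip)
  then have decomposition: "decomposition conj2 (conj_class2 unip) (R \<union> S) R S"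
    unfolding R_def S_def
    by (intro decomposition_SL2_orbits)
      (simp_all add: unip_eq_mat2 det_mat2 SL2_orbits_transvections_disjoint nonsquare)
  have "mat2 1 (t*t) 0 1 \<in> R" "mat2 1 0 (-l) 1 \<in> S"
    using transvection_square_multiple_in_SL2_orbit[OF t(1), of 1] lower_transvection_in_SL2_orbit
    by (simp_all add: R_def S_def unip_eq_mat2)
  moreover have "conj2 (mat2 1 (t*t) 0 1) (conj2 (mat2 1 0 (-l) 1)
      (conj2 (mat2 1 (t*t) 0 1) (mat2 1 0 (-l) 1))) \<noteq> mat2 1 0 (-l) 1"
    using t \<open>l \<noteq> 0\<close> by (intro conj2_transvections_ne) (simp_all add: algebra_simps)
  ultimately show ?thesis
    unfolding type_D_def using decomposition by blast
qed

end
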